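(* Let $m,n,L\ge 2$ be integers. If $\beta=(\pi_\ell)_{\ell=1}^L$, $\pi_\ell=(a_\ell,b_\ell,c_\ell,d_\ell)$, is a chainable architecture such that $\mathcal{B}^\beta$ consists of $m\times n$ matrices and contains at least one matrix all of whose entries are nonzero, then there exist positive integers $q_1,\dots,q_L$ with $m=\prod_{\ell=1}^Lq_\ell$, $p_1,\dots,p_L$ with $n=\prod_{\ell=1}^Lp_\ell$, and $r_1,\dots,r_{L-1}$ such that, with the convention $r_0=r_L=1$, for each $1\le\ell\le L$: $$a_\ell=\prod_{j=1}^{\ell-1}p_j,\quad d_\ell=\prod_{j=\ell+1}^Lq_j,\quad b_\ell=q_\ell r_{\ell-1},\quad c_\ell=p_\ell r_\ell.$$ Conversely, any architecture defined by these formulas from positive integers $p_\ell,q_\ell,r_\ell$ with $n=\prod_\ell p_\ell$ and $m=\prod_\ell q_\ell$ is chainable and $\mathcal{B}^\beta\subseteq\mathbb{R}^{m\times n}$ (real matrices) contains at least one matrix with all entries nonzero. Such an architecture is non-redundant if and only if $r_1<q_1$, $r_{L-1}<p_L$, and $\frac{1}{p_\ell}<\frac{r_\ell}{r_{\ell-1}}<q_\ell$ for all $2\le\ell\le L-1$.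
   Context: A pattern is a tuple $\pi=(a,b,c,d)$ of positive integers; $\mathbf{S}_\pi:=\mathbf{I}_a\otimes\mathbf{1}_{b\times c}\otimes\mathbf{I}_d\in\{0,1\}^{abd\times acd}$. A $\pi$-factor is a matrix of size $abd\times acd$ with support contained in that of $\mathbf{S}_\pi$. Patterns $\pi=(a,b,c,d),\pi'=(a',b',c',d')$ are chainable if $ac/a'=b'd'/d=:r(\pi,\pi')$ is an integer, $a\mid a'$, $d'\mid d$; a chainable pair is redundant if $r(\pi,\pi')\ge\min(b,c')$. An architecture $\beta=(\pi_\ell)_{\ell=1}^L$ is a sequence of patterns with $a_\ell c_\ell d_\ell=a_{\ell+1}b_{\ell+1}d_{\ell+1}$; it is chainable if every consecutive pair is chainable, and (if chainable) redundant if some consecutive pair is redundant. $\mathcal{B}^\beta:=\{\mathbf{X}_1\cdots\mathbf{X}_L:\mathbf{X}_\ell\text{ a }\pi_\ell\text{-factor}\}$. *)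

theory Defs
  imports "Jordan_Normal_Form.Matrix"
begin

type_synonym pattern = "nat \<times> nat \<times> nat \<times> nat"

definition pa :: "pattern \<Rightarrow> nat" where "pa \<pi> = fst \<pi>"
definition pb :: "pattern \<Rightarrow> nat" where "pb \<pi> = fst (snd \<pi>)"
definition pc :: "pattern \<Rightarrow> nat" where "pc \<pi> = fst (snd (snd \<pi>))"
definition pd :: "pattern \<Rightarrow> nat" where "pd \<pi> = snd (snd (snd \<pi>))"

definition kron :: "'a::semiring_1 mat \<Rightarrow> 'a mat \<Rightarrow> 'a mat" where
  "kron A B = mat (dim_row A * dim_row B) (dim_col A * dim_col B)
     (\<lambda>(i,j). A $$ (i div dim_row B, j div dim_col B) * B $$ (i mod dim_row B, j mod dim_col B))"

definition ones_mat :: "nat \<Rightarrow> nat \<Rightarrow> 'a::semiring_1 mat" where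
  "ones_mat b c = mat b c (\<lambda>_. 1)"

definition S_pat :: "pattern \<Rightarrow> real mat" where
  "S_pat \<pi> = kron (kron (1\<^sub>m (pa \<pi>)) (ones_mat (pb \<pi>) (pc \<pi>))) (1\<^sub>m (pd \<pi>))"

definition is_factor :: "pattern \<Rightarrow> real mat \<Rightarrow> bool" where
  "is_factor \<pi> X \<longleftrightarrow>
     X \<in> carrier_mat (pa \<pi> * pb \<pi> * pd \<pi>) (pa \<pi> * pc \<pi> * pd \<pi>) \<and>
     (\<forall>i < pa \<pi> * pb \<pi> * pd \<pi>. \<forall>j < pa \<pi> * pc \<pi> * pd \<pi>.
        S_pat \<pi> $$ (i,j) = 0 \<longrightarrow> X $$ (i,j) = 0)"

fun mprod :: "real mat list \<Rightarrow> real mat" where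
  "mprod [] = 1\<^sub>m 0"
| "mprod [X] = X"
| "mprod (X # Xs) = X * mprod Xs"

definition B_set :: "pattern list \<Rightarrow> real mat set" where
  "B_set \<beta> = {mprod Xs | Xs. length Xs = length \<beta> \<and>
                 (\<forall>l < length \<beta>. is_factor (\<beta> ! l) (Xs ! l))}"

definition pattern_ok :: "pattern \<Rightarrow> bool" where
  "pattern_ok \<pi> \<longleftrightarrow> pa \<pi> > 0 \<and> pb \<pi> > 0 \<and> pc \<pi> > 0 \<and> pd \<pi> > 0"

definition is_arch :: "pattern list \<Rightarrow> bool" where
  "is_arch \<beta> \<longleftrightarrow> (\<forall>\<pi> \<in> set \<beta>. pattern_ok \<pi>) \<and>
     (\<forall>l. Suc l < length \<beta> \<longrightarrow>
        pa (\<beta>!l) * pc (\<beta>!l) * pd (\<beta>!l) = pa (\<beta>!Suc l) * pb (\<beta>!Suc l) * pd (\<beta>!Suc l))"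

definition chainable_pair :: "pattern \<Rightarrow> pattern \<Rightarrow> bool" where
  "chainable_pair \<pi> \<pi>' \<longleftrightarrow>
     pa \<pi>' dvd pa \<pi> * pc \<pi> \<and> pd \<pi> dvd pb \<pi>' * pd \<pi>' \<and>
     pa \<pi> * pc \<pi> div pa \<pi>' = pb \<pi>' * pd \<pi>' div pd \<pi> \<and>
     pa \<pi> dvd pa \<pi>' \<and> pd \<pi>' dvd pd \<pi>"

definition r_pair :: "pattern \<Rightarrow> pattern \<Rightarrow> nat" where
  "r_pair \<pi> \<pi>' = pa \<pi> * pc \<pi> div pa \<pi>'"

definition redundant_pair :: "pattern \<Rightarrow> pattern \<Rightarrow> bool" where
  "redundant_pair \<pi> \<pi>' \<longleftrightarrow> chainable_pair \<pi> \<pi>' \<and> r_pair \<pi> \<pi>' \<ge> min (pb \<pi>) (pc \<pi>')"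

definition chainable_arch :: "pattern list \<Rightarrow> bool" where
  "chainable_arch \<beta> \<longleftrightarrow> is_arch \<beta> \<and>
     (\<forall>l. Suc l < length \<beta> \<longrightarrow> chainable_pair (\<beta>!l) (\<beta>!Suc l))"

definition redundant_arch :: "pattern list \<Rightarrow> bool" where
  "redundant_arch \<beta> \<longleftrightarrow> chainable_arch \<beta> \<and>
     (\<exists>l. Suc l < length \<beta> \<and> redundant_pair (\<beta>!l) (\<beta>!Suc l))"

definition all_nonzero :: "real mat \<Rightarrow> bool" where
  "all_nonzero M \<longleftrightarrow> (\<forall>i < dim_row M. \<forall>j < dim_col M. M $$ (i,j) \<noteq> 0)"

text \<open>The architecture built from p,q,r (1-indexed, r 0 = r L = 1):
  pattern l = (prod_{j<l} p_j, q_l r_{l-1}, p_l r_l, prod_{j>l} q_j), l = 1..L.\<close>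
definition arch_of :: "nat \<Rightarrow> (nat \<Rightarrow> nat) \<Rightarrow> (nat \<Rightarrow> nat) \<Rightarrow> (nat \<Rightarrow> nat) \<Rightarrow> pattern list" where
  "arch_of L p q r = map (\<lambda>l. (\<Prod>j\<in>{1..<l}. p j, q l * r (l - 1), p l * r l, \<Prod>j\<in>{l+1..L}. q j)) [1..<L+1]"

end

theory Submission
  imports Defs
begin

(* A pi-factor is supported where S_pi = I_a (x) 1_(b x c) (x) I_d is, i.e. on the pairs
   (i, j) with i div bd = j div cd and i mod d = j mod d.  The chainability conditions
   a | a', d' | d and d | b'd' are exactly what makes these block patterns compose along
   an architecture: every product of factors is supported on the block pattern of
   (a_1, d_L), and the product of the S_pi themselves is positive on all of it.  A
   product without zero entries therefore forces a_1 = d_L = 1, after which the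
   divisibility chains a_l | a_(l+1) and d_(l+1) | d_l telescope: p_l = a_(l+1) / a_l,
   q_l = d_(l-1) / d_l and the chaining ratios r_l reproduce the architecture.
   Conversely the architecture built from p, q, r is chainable with ratios r_l, so it
   is redundant iff r_l >= min (q_l r_(l-1)) (p_(l+1) r_(l+1)) for some l, which after
   division by r_(l-1) is the negation of the stated ratio bounds. *)

section \<open>Block supports of matrices\<close>

(* The support of I_a (x) 1 (x) I_d, viewed as an R x C matrix. *)
definition same_block :: "nat \<Rightarrow> nat \<Rightarrow> nat \<Rightarrow> nat \<Rightarrow> nat \<Rightarrow> nat \<Rightarrow> bool" where
  "same_block R C a d i j \<longleftrightarrow> i div (R div a) = j div (C div a) \<and> i mod d = j mod d"

lemma div_through_dvd:
  fixes K a a' :: nat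
  assumes "a dvd a'" "a' dvd K"
  shows "K div a = K div a' * (a' div a)"
proof (cases "a = 0")
  case False
  from assms obtain e s where "a' = a * e" "K = a' * s" by (auto elim!: dvdE)
  with False show ?thesis by simp
qed (use assms in simp)

lemma same_block_trans:
  assumes "same_block R K a d i t" "same_block K C a' d' t j"
    and "a dvd a'" "a' dvd K" "a' dvd C" "d' dvd d"
  shows "same_block R C a d' i j"
proof -
  have "i div (R div a) = t div (K div a') div (a' div a)"
    using assms(1) div_through_dvd[OF assms(3,4)] by (simp add: same_block_def div_mult2_eq)
  also have "\<dots> = j div (C div a)"
    using assms(2) div_through_dvd[OF assms(3,5)] by (simp add: same_block_def div_mult2_eq)
  finally show ?thesis
    using assms(1,2,6) unfolding same_block_def by (metis mod_mod_cancel)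
qed

lemma same_block_middle_index:
  assumes ij: "same_block R C a d' i j" "j < C"
    and "a dvd a'" "a' dvd K" "a' dvd C" "d dvd K div a'" "d' dvd d" "0 < d" "0 < K"
  obtains t where "t < K" "same_block R K a d i t" "same_block K C a' d' t j"
proof -
  define s where "s = K div a'"
  (* t keeps the I_d-coordinate of i and the I_a'-block of j. *)
  define t where "t = j div (C div a') * s + i mod d"
  have "0 < a'"
    using assms(2,5) by (cases "a' = 0") auto
  have K: "K = a' * s" and "0 < s"
    using assms(4,9) by (auto simp: s_def)
  have "i mod d < s"
    using dvd_imp_le[OF assms(6)] \<open>0 < s\<close> mod_less_divisor[OF assms(8), of i] by (simp add: s_def)
  then have t_div: "t div s = j div (C div a')"
    by (simp add: t_def)
  have t_mod: "t mod d = i mod d"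
    using assms(6) by (simp add: t_def s_def mod_add_left_eq[symmetric] dvd_imp_mod_0)
  have C: "C = C div a' * a'"
    using assms(5) by simp
  with ij(2) have "0 < C div a'"
    by (cases "C div a' = 0") auto
  with ij(2) C have "j div (C div a') < a'"
    by (metis div_less_iff_less_mult mult.commute)
  have "t < Suc (j div (C div a')) * s"
    using \<open>i mod d < s\<close> by (simp add: t_def)
  also have "\<dots> \<le> K"
    using \<open>j div (C div a') < a'\<close> K by (metis Suc_leI mult_le_mono1)
  finally have "t < K" .
  moreover have "same_block K C a' d' t j"
    using ij(1) assms(7) t_div t_mod by (metis same_block_def s_def mod_mod_cancel)
  moreover have "same_block R K a d i t"
  proof -
    have "i div (R div a) = j div (C div a') div (a' div a)"
      using ij(1) div_through_dvd[OF assms(3,5)] by (simp add: same_block_def div_mult2_eq)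
    also have "\<dots> = t div (K div a)"
      using t_div div_through_dvd[OF assms(3,4)] by (simp add: s_def div_mult2_eq)
    finally show ?thesis
      using t_mod by (simp add: same_block_def)
  qed
  ultimately show ?thesis
    using that by blast
qed

definition block_supported :: "nat \<Rightarrow> nat \<Rightarrow> 'a::zero mat \<Rightarrow> bool" where
  "block_supported a d M \<longleftrightarrow> a dvd dim_row M \<and> a dvd dim_col M \<and>
     (\<forall>i < dim_row M. \<forall>j < dim_col M.
        M $$ (i, j) \<noteq> 0 \<longrightarrow> same_block (dim_row M) (dim_col M) a d i j)"

definition block_positive :: "nat \<Rightarrow> nat \<Rightarrow> 'a::linordered_idom mat \<Rightarrow> bool" where
  "block_positive a d M \<longleftrightarrow> a dvd dim_row M \<and> a dvd dim_col M \<and>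
     (\<forall>i < dim_row M. \<forall>j < dim_col M.
        0 \<le> M $$ (i, j) \<and> (same_block (dim_row M) (dim_col M) a d i j \<longrightarrow> 0 < M $$ (i, j)))"

lemma index_mult_mat_sum:
  assumes "dim_col A = dim_row B" "i < dim_row A" "j < dim_col B"
  shows "(A * B) $$ (i, j) = (\<Sum>t<dim_row B. A $$ (i, t) * B $$ (t, j))"
  using assms by (simp add: scalar_prod_def atLeast0LessThan)

lemma index_mult_mat_nonzeroE:
  assumes "(A * B) $$ (i, j) \<noteq> 0" "dim_col A = dim_row B" "i < dim_row A" "j < dim_col B"
  obtains t where "t < dim_row B" "A $$ (i, t) \<noteq> 0" "B $$ (t, j) \<noteq> 0"
proof -
  have "(\<Sum>t<dim_row B. A $$ (i, t) * B $$ (t, j)) \<noteq> 0"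
    using assms(1) unfolding index_mult_mat_sum[OF assms(2-4)] .
  then obtain t where "t < dim_row B" "A $$ (i, t) * B $$ (t, j) \<noteq> 0"
    using sum.not_neutral_contains_not_neutral by blast
  then show ?thesis
    by (intro that) auto
qed

lemma block_supported_mult:
  fixes X Y :: "'a::semiring_0 mat"
  assumes X: "block_supported a d X" and Y: "block_supported a' d' Y"
    and dim: "dim_col X = dim_row Y" and "a dvd a'" "d' dvd d"
  shows "block_supported a d' (X * Y)"
proof -
  have "a dvd dim_col Y"
    using Y \<open>a dvd a'\<close> by (meson block_supported_def dvd_trans)
  moreover have "same_block (dim_row X) (dim_col Y) a d' i j"
    if ij: "i < dim_row X" "j < dim_col Y" "(X * Y) $$ (i, j) \<noteq> 0" for i j
  proof -
    obtain t where t: "t < dim_row Y" "X $$ (i, t) \<noteq> 0" "Y $$ (t, j) \<noteq> 0"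
      using index_mult_mat_nonzeroE[OF ij(3) dim ij(1,2)] .
    have "same_block (dim_row X) (dim_row Y) a d i t"
      using X dim ij t by (simp add: block_supported_def)
    moreover have "same_block (dim_row Y) (dim_col Y) a' d' t j"
      using Y ij t by (simp add: block_supported_def)
    ultimately show ?thesis
      using Y assms(4,5) same_block_trans by (metis block_supported_def)
  qed
  ultimately show ?thesis
    using X by (simp add: block_supported_def)
qed

lemma block_positive_mult:
  fixes X Y :: "'a::linordered_idom mat"
  assumes X: "block_positive a d X" and Y: "block_positive a' d' Y"
    and dim: "dim_col X = dim_row Y" and "a dvd a'" "d dvd dim_row Y div a'" "d' dvd d"
    and "0 < d" "0 < dim_row Y"
  shows "block_positive a d' (X * Y)"
proof -
  have terms_nonneg: "0 \<le> X $$ (i, t) * Y $$ (t, j)"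
    if "i < dim_row X" "t < dim_row Y" "j < dim_col Y" for i t j
    using X Y dim that by (simp add: block_positive_def)
  have "a dvd dim_col Y"
    using Y \<open>a dvd a'\<close> by (meson block_positive_def dvd_trans)
  moreover have "0 \<le> (X * Y) $$ (i, j)" if "i < dim_row X" "j < dim_col Y" for i j
    unfolding index_mult_mat_sum[OF dim that] using that by (auto intro!: sum_nonneg terms_nonneg)
  moreover have "0 < (X * Y) $$ (i, j)"
    if ij: "i < dim_row X" "j < dim_col Y" "same_block (dim_row X) (dim_col Y) a d' i j" for i j
  proof -
    obtain t where t: "t < dim_row Y" "same_block (dim_row X) (dim_row Y) a d i t"
        "same_block (dim_row Y) (dim_col Y) a' d' t j"
      using same_block_middle_index[OF ij(3,2) assms(4)] Y assms(5-8)
      by (metis block_positive_def)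
    have "0 < X $$ (i, t) * Y $$ (t, j)"
      using X Y dim ij t by (simp add: block_positive_def)
    also have "\<dots> \<le> (\<Sum>t<dim_row Y. X $$ (i, t) * Y $$ (t, j))"
      using t(1) ij terms_nonneg by (intro member_le_sum) auto
    finally show ?thesis
      unfolding index_mult_mat_sum[OF dim ij(1,2)] .
  qed
  ultimately show ?thesis
    using X by (simp add: block_positive_def)
qed

lemma block_supported_all_nonzero:
  assumes "all_nonzero M" "block_supported a d M" "0 < dim_row M" "2 \<le> dim_col M"
  shows "a = 1 \<and> d = 1"
proof -
  let ?R = "dim_row M" and ?C = "dim_col M"
  have supp: "same_block ?R ?C a d i j" if "i < ?R" "j < ?C" for i j
    using assms(1,2) that by (simp add: all_nonzero_def block_supported_def)
  have "a dvd ?C"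
    using assms(2) by (simp add: block_supported_def)
  then have "0 < a"
    using assms(4) by (cases "a = 0") auto
  have "a \<le> ?C"
    using \<open>a dvd ?C\<close> assms(4) by (simp add: dvd_imp_le)
  have "a = 1"
  proof (rule ccontr)
    assume "a \<noteq> 1"
    with \<open>0 < a\<close> have "?C div a < ?C" "0 < ?C div a"
      using assms(4) \<open>a \<le> ?C\<close> by (simp_all add: div_less_dividend div_greater_zero_iff)
    then show False
      using supp[OF assms(3), of "?C div a"] by (simp add: same_block_def)
  qed
  moreover have "d = 1"
    using supp[OF assms(3), of 1] assms(4) by (simp add: same_block_def)
  ultimately show ?thesis ..
qed

lemma block_positive_all_nonzero: "block_positive 1 1 M \<Longrightarrow> all_nonzero M"
  by (fastforce simp: block_positive_def all_nonzero_def same_block_def)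

section \<open>Products of factors along chainable architectures\<close>

definition pat_rows :: "pattern \<Rightarrow> nat" where "pat_rows \<pi> = pa \<pi> * pb \<pi> * pd \<pi>"

definition pat_cols :: "pattern \<Rightarrow> nat" where "pat_cols \<pi> = pa \<pi> * pc \<pi> * pd \<pi>"

lemma S_pat_entry:
  assumes "pattern_ok \<pi>" "i < pat_rows \<pi>" "j < pat_cols \<pi>"
  shows "S_pat \<pi> $$ (i, j) =
    (if same_block (pat_rows \<pi>) (pat_cols \<pi>) (pa \<pi>) (pd \<pi>) i j then 1 else 0)"
proof -
  obtain a b c d where \<pi>: "\<pi> = (a, b, c, d)" by (cases \<pi>) auto
  have comps: "pa \<pi> = a" "pb \<pi> = b" "pc \<pi> = c" "pd \<pi> = d"
    by (simp_all add: \<pi> pa_def pb_def pc_def pd_def)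
  have pos: "0 < a" "0 < b" "0 < c" "0 < d"
    using assms(1) by (simp_all add: pattern_ok_def comps)
  have i: "i < a * b * d" and j: "j < a * c * d"
    using assms(2,3) by (simp_all add: pat_rows_def pat_cols_def comps)
  have "i div d div b < a" "j div d div c < a"
    using i j pos by (simp_all add: div_less_iff_less_mult ac_simps)
  then have "S_pat \<pi> $$ (i, j) = (if i div d div b = j div d div c \<and> i mod d = j mod d then 1 else 0)"
    using i j pos by (simp add: S_pat_def kron_def ones_mat_def comps ac_simps div_less_iff_less_mult)
  also have "\<dots> = (if same_block (a * b * d) (a * c * d) a d i j then 1 else 0)"
    using pos by (simp add: same_block_def div_mult2_eq[of _ d] mult.commute[of _ d] mult.assoc)
  finally show ?thesis by (simp add: pat_rows_def pat_cols_def comps)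
qed

lemma is_factor_S_pat: "is_factor \<pi> (S_pat \<pi>)"
  by (simp add: is_factor_def S_pat_def kron_def ones_mat_def ac_simps)

lemma factor_block_supported:
  assumes "pattern_ok \<pi>" "is_factor \<pi> X"
  shows "block_supported (pa \<pi>) (pd \<pi>) X"
proof -
  have X: "X \<in> carrier_mat (pat_rows \<pi>) (pat_cols \<pi>)"
    using assms(2) by (simp add: is_factor_def pat_rows_def pat_cols_def)
  have "same_block (pat_rows \<pi>) (pat_cols \<pi>) (pa \<pi>) (pd \<pi>) i j"
    if ij: "i < pat_rows \<pi>" "j < pat_cols \<pi>" "X $$ (i, j) \<noteq> 0" for i j
  proof -
    have "S_pat \<pi> $$ (i, j) \<noteq> 0"
      using assms(2) ij by (auto simp: is_factor_def pat_rows_def pat_cols_def)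
    then show ?thesis
      using S_pat_entry[OF assms(1) ij(1,2)] by argo
  qed
  with X show ?thesis
    by (simp add: block_supported_def pat_rows_def pat_cols_def)
qed

lemma S_pat_block_positive:
  assumes "pattern_ok \<pi>"
  shows "block_positive (pa \<pi>) (pd \<pi>) (S_pat \<pi>)"
  using S_pat_entry[OF assms]
  by (simp add: block_positive_def S_pat_def kron_def ones_mat_def pat_rows_def pat_cols_def)

lemma chainable_arch_Cons:
  "chainable_arch (\<pi> # \<beta>) \<longleftrightarrow> pattern_ok \<pi> \<and> chainable_arch \<beta> \<and>
     (\<beta> \<noteq> [] \<longrightarrow> chainable_pair \<pi> (hd \<beta>) \<and> pat_cols \<pi> = pat_rows (hd \<beta>))"
proof -
  have shift: "(\<forall>l. Suc l < length (\<pi> # \<beta>) \<longrightarrow> P ((\<pi> # \<beta>) ! l) ((\<pi> # \<beta>) ! Suc l)) \<longleftrightarrow>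
      (\<beta> \<noteq> [] \<longrightarrow> P \<pi> (hd \<beta>)) \<and> (\<forall>l. Suc l < length \<beta> \<longrightarrow> P (\<beta> ! l) (\<beta> ! Suc l))" for P
    by (cases \<beta>) (auto simp: All_less_Suc2 simp flip: All_less_Suc2[where P = "\<lambda>l. Suc l < _ \<longrightarrow> _"])
  have "chainable_arch \<beta>' \<longleftrightarrow> (\<forall>\<pi>\<in>set \<beta>'. pattern_ok \<pi>) \<and>
      (\<forall>l. Suc l < length \<beta>' \<longrightarrow> chainable_pair (\<beta>' ! l) (\<beta>' ! Suc l) \<and>
         pat_cols (\<beta>' ! l) = pat_rows (\<beta>' ! Suc l))" for \<beta>'
    by (auto simp: chainable_arch_def is_arch_def pat_rows_def pat_cols_def)
  then show ?thesis
    by (simp only: shift[of "\<lambda>\<pi> \<pi>'. chainable_pair \<pi> \<pi>' \<and> pat_cols \<pi> = pat_rows \<pi>'"]) auto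
qed

lemma chainable_arch_pd_last_dvd_hd:
  "chainable_arch \<beta> \<Longrightarrow> \<beta> \<noteq> [] \<Longrightarrow> pd (last \<beta>) dvd pd (hd \<beta>)"
proof (induction \<beta>)
  case (Cons \<pi> \<beta>)
  then show ?case
    by (cases "\<beta> = []") (auto simp: chainable_arch_Cons chainable_pair_def intro: dvd_trans)
qed simp

lemma mprod_Cons: "Xs \<noteq> [] \<Longrightarrow> mprod (X # Xs) = X * mprod Xs"
  by (cases Xs) auto

lemma mprod_factors:
  assumes "list_all2 is_factor \<beta> Xs" "chainable_arch \<beta>" "\<beta> \<noteq> []"
  shows "mprod Xs \<in> carrier_mat (pat_rows (hd \<beta>)) (pat_cols (last \<beta>)) \<and>
    block_supported (pa (hd \<beta>)) (pd (last \<beta>)) (mprod Xs)"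
  using assms
proof (induction \<beta> Xs rule: list_all2_induct)
  case (Cons \<pi> \<beta> X Xs)
  have ok: "pattern_ok \<pi>" and ch: "chainable_arch \<beta>"
    using Cons.prems(1) by (simp_all add: chainable_arch_Cons)
  have X: "X \<in> carrier_mat (pat_rows \<pi>) (pat_cols \<pi>)"
    using Cons.hyps(1) by (simp add: is_factor_def pat_rows_def pat_cols_def)
  note X_supp = factor_block_supported[OF ok Cons.hyps(1)]
  show ?case
  proof (cases "\<beta> = []")
    case True
    then show ?thesis
      using Cons.hyps(2) X X_supp by simp
  next
    case False
    then have "Xs \<noteq> []" and pair: "chainable_pair \<pi> (hd \<beta>)" and "pat_cols \<pi> = pat_rows (hd \<beta>)"
      using Cons.hyps(2) Cons.prems(1) by (auto simp: chainable_arch_Cons list_all2_Nil)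
    moreover obtain "mprod Xs \<in> carrier_mat (pat_rows (hd \<beta>)) (pat_cols (last \<beta>))"
      "block_supported (pa (hd \<beta>)) (pd (last \<beta>)) (mprod Xs)"
      using Cons.IH ch False by blast
    moreover have "pd (last \<beta>) dvd pd \<pi>"
      using chainable_arch_pd_last_dvd_hd[OF ch False] pair by (auto simp: chainable_pair_def intro: dvd_trans)
    ultimately show ?thesis
      using X X_supp block_supported_mult[OF X_supp] pair False
      by (simp add: mprod_Cons chainable_pair_def)
  qed
qed simp

lemma B_set_iff: "M \<in> B_set \<beta> \<longleftrightarrow> (\<exists>Xs. M = mprod Xs \<and> list_all2 is_factor \<beta> Xs)"
  by (auto simp: B_set_def list_all2_conv_all_nth)

lemma B_set_block_supported:
  assumes "chainable_arch \<beta>" "\<beta> \<noteq> []" "M \<in> B_set \<beta>"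
  shows "M \<in> carrier_mat (pat_rows (hd \<beta>)) (pat_cols (last \<beta>))"
    and "block_supported (pa (hd \<beta>)) (pd (last \<beta>)) M"
  using assms mprod_factors by (auto simp: B_set_iff)

lemma S_pat_product_in_B_set: "mprod (map S_pat \<beta>) \<in> B_set \<beta>"
  by (auto simp: B_set_iff list_all2_conv_all_nth is_factor_S_pat)

lemma B_set_full_support_ends:
  assumes "chainable_arch \<beta>" "\<beta> \<noteq> []" "M \<in> B_set \<beta>" "all_nonzero M"
    and "0 < pat_rows (hd \<beta>)" "2 \<le> pat_cols (last \<beta>)"
  shows "pa (hd \<beta>) = 1" "pd (last \<beta>) = 1"
  using block_supported_all_nonzero[OF assms(4) B_set_block_supported(2)[OF assms(1-3)]]
    B_set_block_supported(1)[OF assms(1-3)] assms(5,6) by auto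

lemma mprod_S_pat_block_positive:
  assumes "chainable_arch \<beta>" "\<beta> \<noteq> []"
  shows "block_positive (pa (hd \<beta>)) (pd (last \<beta>)) (mprod (map S_pat \<beta>))"
  using assms
proof (induction \<beta>)
  case (Cons \<pi> \<beta>)
  have ok: "pattern_ok \<pi>" and ch: "chainable_arch \<beta>"
    using Cons.prems(1) by (simp_all add: chainable_arch_Cons)
  show ?case
  proof (cases "\<beta> = []")
    case True
    then show ?thesis
      using S_pat_block_positive[OF ok] by simp
  next
    case False
    then have pair: "chainable_pair \<pi> (hd \<beta>)" and link: "pat_cols \<pi> = pat_rows (hd \<beta>)"
      using Cons.prems(1) by (auto simp: chainable_arch_Cons)
    have Y: "mprod (map S_pat \<beta>) \<in> carrier_mat (pat_rows (hd \<beta>)) (pat_cols (last \<beta>))"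
      using mprod_factors[OF _ ch False] by (simp add: list_all2_conv_all_nth is_factor_S_pat)
    have ok': "pattern_ok (hd \<beta>)"
      using ch False by (simp add: chainable_arch_def is_arch_def)
    have "dim_col (S_pat \<pi>) = dim_row (mprod (map S_pat \<beta>))"
      using is_factor_S_pat[of \<pi>] Y link by (simp add: is_factor_def pat_cols_def)
    moreover have "pa \<pi> dvd pa (hd \<beta>)"
      using pair by (simp add: chainable_pair_def)
    moreover have "pd \<pi> dvd dim_row (mprod (map S_pat \<beta>)) div pa (hd \<beta>)"
      using pair ok' Y by (simp add: chainable_pair_def pat_rows_def pattern_ok_def mult.assoc)
    moreover have "pd (last \<beta>) dvd pd \<pi>"
      using chainable_arch_pd_last_dvd_hd[OF ch False] pair by (auto simp: chainable_pair_def intro: dvd_trans)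
    moreover have "0 < pd \<pi>" "0 < dim_row (mprod (map S_pat \<beta>))"
      using ok ok' Y by (simp_all add: pat_rows_def pattern_ok_def)
    ultimately have "block_positive (pa \<pi>) (pd (last \<beta>)) (S_pat \<pi> * mprod (map S_pat \<beta>))"
      using block_positive_mult[OF S_pat_block_positive[OF ok] Cons.IH[OF ch False]] by blast
    then show ?thesis
      using False by (simp add: mprod_Cons)
  qed
qed simp

section \<open>The architecture built from p, q, r\<close>

lemma length_arch_of: "length (arch_of L p q r) = L"
  by (simp add: arch_of_def)

lemma nth_arch_of:
  assumes "l \<in> {1..L}"
  shows "arch_of L p q r ! (l - 1) =
    (\<Prod>j\<in>{1..<l}. p j, q l * r (l - 1), p l * r l, \<Prod>j\<in>{l+1..L}. q j)"
proof -
  obtain k where "l = Suc k" "k < L"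
    using assms by (cases l) auto
  then show ?thesis
    by (simp add: arch_of_def del: upt_Suc)
qed

lemma chainable_pair_arch_of_form:
  assumes "0 < A" "0 < p" "0 < q" "0 < D"
  shows "chainable_pair (A, x, p * r, q * D) (A * p, q * r, y, D)"
    and "r_pair (A, x, p * r, q * D) (A * p, q * r, y, D) = r"
    and "pat_cols (A, x, p * r, q * D) = pat_rows (A * p, q * r, y, D)"
  using assms
  by (simp_all add: chainable_pair_def r_pair_def pat_rows_def pat_cols_def pa_def pb_def pc_def pd_def ac_simps)

lemma arch_of_link:
  assumes "\<forall>l\<in>{1..L}. 0 < p l \<and> 0 < q l" "l \<in> {1..<L}"
  shows "chainable_pair (arch_of L p q r ! (l - 1)) (arch_of L p q r ! l)"
    and "r_pair (arch_of L p q r ! (l - 1)) (arch_of L p q r ! l) = r l"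
    and "pat_cols (arch_of L p q r ! (l - 1)) = pat_rows (arch_of L p q r ! l)"
proof -
  let ?P = "\<Prod>j\<in>{1..<l}. p j" and ?Q = "\<Prod>j\<in>{l+2..L}. q j"
  have "arch_of L p q r ! (l - 1) = (?P, q l * r (l - 1), p l * r l, q (l + 1) * ?Q)"
    using assms(2) nth_arch_of[of l L] by (simp add: prod.atLeast_Suc_atMost)
  moreover have "arch_of L p q r ! l = (?P * p l, q (l + 1) * r l, p (l + 1) * r (l + 1), ?Q)"
    using assms(2) nth_arch_of[of "l + 1" L] by (simp add: prod.atLeastLessThan_Suc)
  moreover have "0 < ?P" "0 < p l" "0 < q (l + 1)" "0 < ?Q"
    using assms by (auto intro!: prod_pos)
  ultimately show "chainable_pair (arch_of L p q r ! (l - 1)) (arch_of L p q r ! l)"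
    and "r_pair (arch_of L p q r ! (l - 1)) (arch_of L p q r ! l) = r l"
    and "pat_cols (arch_of L p q r ! (l - 1)) = pat_rows (arch_of L p q r ! l)"
    using chainable_pair_arch_of_form by simp_all
qed

lemma chainable_arch_arch_of:
  assumes "\<forall>l\<in>{1..L}. 0 < p l \<and> 0 < q l" "\<forall>l\<in>{1..<L}. 0 < r l" "r 0 = 1" "r L = 1"
  shows "chainable_arch (arch_of L p q r)"
proof -
  have r_pos: "0 < r l" if "l \<le> L" for l
    using assms(2-4) that by (cases "l = 0 \<or> l = L") auto
  have ok: "pattern_ok (arch_of L p q r ! (l - 1))" if "l \<in> {1..L}" for l
    unfolding nth_arch_of[OF that] using assms(1) that r_pos[of l] r_pos[of "l - 1"]
    by (auto simp: pattern_ok_def pa_def pb_def pc_def pd_def intro!: prod_pos)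
  show ?thesis
    unfolding chainable_arch_def is_arch_def
  proof (intro conjI allI impI ballI)
    fix \<pi> assume "\<pi> \<in> set (arch_of L p q r)"
    then obtain k where "k < L" "\<pi> = arch_of L p q r ! (Suc k - 1)"
      by (auto simp: in_set_conv_nth length_arch_of)
    then show "pattern_ok \<pi>"
      using ok[of "Suc k"] by simp
  next
    fix l assume "Suc l < length (arch_of L p q r)"
    then have "Suc l \<in> {1..<L}"
      by (simp add: length_arch_of)
    from arch_of_link[OF assms(1) this]
    show "chainable_pair (arch_of L p q r ! l) (arch_of L p q r ! Suc l)"
      and "pa (arch_of L p q r ! l) * pc (arch_of L p q r ! l) * pd (arch_of L p q r ! l) =
        pa (arch_of L p q r ! Suc l) * pb (arch_of L p q r ! Suc l) * pd (arch_of L p q r ! Suc l)"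
      by (simp_all add: pat_rows_def pat_cols_def)
  qed
qed

lemma arch_of_ends:
  assumes "0 < L" "r 0 = 1" "r L = 1"
  shows "pa (hd (arch_of L p q r)) = 1" "pat_rows (hd (arch_of L p q r)) = (\<Prod>l\<in>{1..L}. q l)"
    and "pd (last (arch_of L p q r)) = 1" "pat_cols (last (arch_of L p q r)) = (\<Prod>l\<in>{1..L}. p l)"
proof -
  have "arch_of L p q r \<noteq> []"
    using assms(1) length_arch_of[of L p q r] by auto
  then have "hd (arch_of L p q r) = arch_of L p q r ! (1 - 1)"
    and "last (arch_of L p q r) = arch_of L p q r ! (L - 1)"
    by (simp_all add: hd_conv_nth last_conv_nth length_arch_of)
  then show "pa (hd (arch_of L p q r)) = 1" "pat_rows (hd (arch_of L p q r)) = (\<Prod>l\<in>{1..L}. q l)"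
    and "pd (last (arch_of L p q r)) = 1" "pat_cols (last (arch_of L p q r)) = (\<Prod>l\<in>{1..L}. p l)"
    using assms nth_arch_of[of 1 L p q r] nth_arch_of[of L L p q r]
    by (simp_all add: pat_rows_def pat_cols_def pa_def pb_def pc_def pd_def prod.atLeast_Suc_atMost
        prod.atLeastLessThan_Suc[symmetric] atLeastLessThanSuc_atLeastAtMost)
qed

lemma arch_of_B_set:
  assumes "0 < L" "\<forall>l\<in>{1..L}. 0 < p l \<and> 0 < q l" "\<forall>l\<in>{1..<L}. 0 < r l" "r 0 = 1" "r L = 1"
  shows "B_set (arch_of L p q r) \<subseteq> carrier_mat (\<Prod>l\<in>{1..L}. q l) (\<Prod>l\<in>{1..L}. p l)"
    and "\<exists>M\<in>B_set (arch_of L p q r). all_nonzero M"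
proof -
  have ch: "chainable_arch (arch_of L p q r)"
    using chainable_arch_arch_of assms(2-5) .
  have ne: "arch_of L p q r \<noteq> []"
    using assms(1) length_arch_of[of L p q r] by auto
  show "B_set (arch_of L p q r) \<subseteq> carrier_mat (\<Prod>l\<in>{1..L}. q l) (\<Prod>l\<in>{1..L}. p l)"
    using B_set_block_supported(1)[OF ch ne] arch_of_ends[OF assms(1,4,5)] by auto
  have "block_positive 1 1 (mprod (map S_pat (arch_of L p q r)))"
    using mprod_S_pat_block_positive[OF ch ne] arch_of_ends[OF assms(1,4,5)] by simp
  then show "\<exists>M\<in>B_set (arch_of L p q r). all_nonzero M"
    using S_pat_product_in_B_set block_positive_all_nonzero by blast
qed

lemma nonredundant_arch_of_iff:
  assumes "\<forall>l\<in>{1..L}. 0 < p l \<and> 0 < q l" "\<forall>l\<in>{1..<L}. 0 < r l" "r 0 = 1" "r L = 1"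
  shows "\<not> redundant_arch (arch_of L p q r) \<longleftrightarrow>
    (\<forall>k. Suc k < L \<longrightarrow> r (Suc k) < q (Suc k) * r k \<and> r (Suc k) < p (Suc (Suc k)) * r (Suc (Suc k)))"
proof -
  have "redundant_pair (arch_of L p q r ! k) (arch_of L p q r ! Suc k) \<longleftrightarrow>
      min (q (Suc k) * r k) (p (Suc (Suc k)) * r (Suc (Suc k))) \<le> r (Suc k)" if "Suc k < L" for k
  proof -
    have "chainable_pair (arch_of L p q r ! k) (arch_of L p q r ! Suc k)"
      and "r_pair (arch_of L p q r ! k) (arch_of L p q r ! Suc k) = r (Suc k)"
      using arch_of_link[OF assms(1), of "Suc k"] that by simp_all
    moreover have "pb (arch_of L p q r ! k) = q (Suc k) * r k"
      and "pc (arch_of L p q r ! Suc k) = p (Suc (Suc k)) * r (Suc (Suc k))"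
      using nth_arch_of[of "Suc k" L p q r] nth_arch_of[of "Suc (Suc k)" L p q r] that
      by (simp_all add: pb_def pc_def)
    ultimately show ?thesis
      by (simp add: redundant_pair_def)
  qed
  then show ?thesis
    using chainable_arch_arch_of[OF assms] by (auto simp: redundant_arch_def length_arch_of not_le)
qed

lemma ratio_bounds_iff:
  fixes p q s t :: nat
  assumes "0 < p" "0 < s"
  shows "(1 / real p < real t / real s \<and> real t / real s < real q) \<longleftrightarrow> s < p * t \<and> t < q * s"
proof -
  have "1 / real p < real t / real s \<longleftrightarrow> real s < real p * real t"
    using assms by (simp add: field_simps)
  moreover have "real t / real s < real q \<longleftrightarrow> real t < real q * real s"
    using assms by (simp add: field_simps)
  ultimately show ?thesis
    by (simp flip: of_nat_mult)
qed

lemma nonredundancy_conditions_iff: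
  fixes p q r :: "nat \<Rightarrow> nat"
  assumes "2 \<le> L" "\<forall>l\<in>{1..L}. 0 < p l" "\<forall>l\<in>{1..<L}. 0 < r l" "r 0 = 1" "r L = 1"
  shows "(\<forall>k. Suc k < L \<longrightarrow> r (Suc k) < q (Suc k) * r k \<and> r (Suc k) < p (Suc (Suc k)) * r (Suc (Suc k)))
    \<longleftrightarrow> r 1 < q 1 \<and> r (L - 1) < p L \<and>
      (\<forall>l\<in>{2..L-1}. 1 / real (p l) < real (r l) / real (r (l - 1)) \<and>
                     real (r l) / real (r (l - 1)) < real (q l))"
proof -
  let ?U = "\<lambda>l. r l < q l * r (l - 1)" and ?V = "\<lambda>l. r (l - 1) < p l * r l"
  have "(\<forall>k. Suc k < L \<longrightarrow> ?U (Suc k) \<and> ?V (Suc (Suc k))) \<longleftrightarrow>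
      ?U 1 \<and> ?V L \<and> (\<forall>l\<in>{2..L-1}. ?V l \<and> ?U l)" (is "?lhs \<longleftrightarrow> ?rhs")
  proof
    assume H: ?lhs
    have "?U 1" "?V L"
      using H[rule_format, of 0] H[rule_format, of "L - 2"] assms(1)
      by (simp_all add: Suc_diff_Suc numeral_2_eq_2)
    moreover have "?V l \<and> ?U l" if "l \<in> {2..L-1}" for l
    proof -
      have "Suc (l - 2) = l - 1" "Suc (l - 1) = l" "l < L"
        using that assms(1) by auto
      then show ?thesis
        using H[rule_format, of "l - 2"] H[rule_format, of "l - 1"] by simp
    qed
    ultimately show ?rhs
      by blast
  next
    assume H: ?rhs
    then have inner: "?V l \<and> ?U l" if "l \<in> {2..L-1}" for l
      using that by blast
    show ?lhs
    proof (intro allI impI)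
      fix k assume "Suc k < L"
      then show "?U (Suc k) \<and> ?V (Suc (Suc k))"
        using H inner[of "Suc k"] inner[of "Suc (Suc k)"]
        by (cases "k = 0"; cases "Suc (Suc k) = L") auto
    qed
  qed
  also have "(\<forall>l\<in>{2..L-1}. ?V l \<and> ?U l) \<longleftrightarrow>
      (\<forall>l\<in>{2..L-1}. 1 / real (p l) < real (r l) / real (r (l - 1)) \<and>
                     real (r l) / real (r (l - 1)) < real (q l))"
  proof (intro ball_cong refl ratio_bounds_iff[symmetric])
    fix l assume "l \<in> {2..L-1}"
    then have "l \<in> {1..L}" "l - 1 \<in> {1..<L}"
      by auto
    then show "0 < p l" "0 < r (l - 1)"
      using assms(2,3) by blast+
  qed
  finally show ?thesis
    using assms(4,5) by simp
qed

section \<open>Reading off p, q, r from a chainable architecture\<close>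

lemma prod_quotients_telescope:
  fixes f :: "nat \<Rightarrow> 'a::algebraic_semidom"
  assumes "m \<le> k" "\<And>j. m \<le> j \<Longrightarrow> j < k \<Longrightarrow> f j dvd f (Suc j)"
  shows "f m * (\<Prod>j\<in>{m..<k}. f (Suc j) div f j) = f k"
  using assms
proof (induction k rule: dec_induct)
  case (step k)
  then show ?case
    by (simp add: prod.atLeastLessThan_Suc mult.assoc[symmetric])
qed simp

lemma prod_quotients_telescope':
  fixes g :: "nat \<Rightarrow> 'a::algebraic_semidom"
  assumes "k \<le> K" "\<And>j. k < j \<Longrightarrow> j \<le> K \<Longrightarrow> g j dvd g (j - 1)"
  shows "g K * (\<Prod>j\<in>{Suc k..K}. g (j - 1) div g j) = g k"
  using assms
proof (induction k rule: inc_induct)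
  case (step k)
  have "g K * (\<Prod>j\<in>{Suc k..K}. g (j - 1) div g j)
      = g K * (\<Prod>j\<in>{Suc (Suc k)..K}. g (j - 1) div g j) * (g k div g (Suc k))"
    using step.hyps by (simp add: prod.atLeast_Suc_atMost ac_simps)
  also have "\<dots> = g (Suc k) * (g k div g (Suc k))"
    using step.prems by (subst step.IH) auto
  also have "\<dots> = g k"
    using step.prems[of "Suc k"] step.hyps by simp
  finally show ?case .
qed simp

lemma chainable_pair_factors:
  assumes "chainable_pair \<pi> \<pi>'" "pattern_ok \<pi>" "pattern_ok \<pi>'"
  shows "pc \<pi> = pa \<pi>' div pa \<pi> * r_pair \<pi> \<pi>'" "pb \<pi>' = pd \<pi> div pd \<pi>' * r_pair \<pi> \<pi>'"
proof -
  obtain e f where e: "pa \<pi>' = pa \<pi> * e" and f: "pd \<pi> = pd \<pi>' * f"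
    using assms(1) by (auto simp: chainable_pair_def elim!: dvdE)
  have "pa \<pi>' dvd pa \<pi> * pc \<pi>" "pd \<pi> dvd pb \<pi>' * pd \<pi>'"
    and r: "r_pair \<pi> \<pi>' = pb \<pi>' * pd \<pi>' div pd \<pi>"
    using assms(1) by (simp_all add: chainable_pair_def r_pair_def)
  have "pa \<pi> * pc \<pi> = pa \<pi>' * r_pair \<pi> \<pi>'"
    using \<open>pa \<pi>' dvd pa \<pi> * pc \<pi>\<close> by (simp add: r_pair_def)
  moreover have "pb \<pi>' * pd \<pi>' = pd \<pi> * r_pair \<pi> \<pi>'"
    using \<open>pd \<pi> dvd pb \<pi>' * pd \<pi>'\<close> by (simp add: r)
  ultimately show "pc \<pi> = pa \<pi>' div pa \<pi> * r_pair \<pi> \<pi>'" "pb \<pi>' = pd \<pi> div pd \<pi>' * r_pair \<pi> \<pi>'"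
    using e f assms(2,3) by (simp_all add: pattern_ok_def ac_simps)
qed

lemma chainable_arch_nth:
  assumes "chainable_arch \<beta>"
  shows chainable_arch_nth_pattern_ok: "l \<in> {1..length \<beta>} \<Longrightarrow> pattern_ok (\<beta> ! (l - 1))"
    and chainable_arch_nth_pair: "l \<in> {1..<length \<beta>} \<Longrightarrow> chainable_pair (\<beta> ! (l - 1)) (\<beta> ! l)"
proof -
  show "pattern_ok (\<beta> ! (l - 1))" if "l \<in> {1..length \<beta>}"
    using assms that nth_mem[of "l - 1" \<beta>] by (auto simp: chainable_arch_def is_arch_def)
  show "chainable_pair (\<beta> ! (l - 1)) (\<beta> ! l)" if "l \<in> {1..<length \<beta>}"
  proof -
    have "Suc (l - 1) < length \<beta>" "Suc (l - 1) = l"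
      using that by auto
    then show ?thesis
      using assms unfolding chainable_arch_def by metis
  qed
qed

definition arch_p :: "pattern list \<Rightarrow> nat \<Rightarrow> nat" where
  "arch_p \<beta> l = (if l < length \<beta> then pa (\<beta> ! l) div pa (\<beta> ! (l - 1)) else pc (\<beta> ! (l - 1)))"

definition arch_q :: "pattern list \<Rightarrow> nat \<Rightarrow> nat" where
  "arch_q \<beta> l = (if l = 1 then pb (\<beta> ! 0) else pd (\<beta> ! (l - 2)) div pd (\<beta> ! (l - 1)))"

definition arch_r :: "pattern list \<Rightarrow> nat \<Rightarrow> nat" where
  "arch_r \<beta> l = (if 0 < l \<and> l < length \<beta> then r_pair (\<beta> ! (l - 1)) (\<beta> ! l) else 1)"

lemma chainable_arch_pc:
  assumes "chainable_arch \<beta>" "l \<in> {1..length \<beta>}"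
  shows "pc (\<beta> ! (l - 1)) = arch_p \<beta> l * arch_r \<beta> l"
proof (cases "l < length \<beta>")
  case True
  with assms(2) have l: "l \<in> {1..<length \<beta>}" "Suc l \<in> {1..length \<beta>}"
    by auto
  then have "pattern_ok (\<beta> ! l)"
    using chainable_arch_nth_pattern_ok[OF assms(1) l(2)] by simp
  then show ?thesis
    using chainable_pair_factors(1)[OF chainable_arch_nth_pair[OF assms(1) l(1)]
        chainable_arch_nth_pattern_ok[OF assms]] l(1) True
    by (simp add: arch_p_def arch_r_def)
qed (use assms(2) in \<open>simp add: arch_p_def arch_r_def\<close>)

lemma chainable_arch_pb:
  assumes "chainable_arch \<beta>" "l \<in> {1..length \<beta>}"
  shows "pb (\<beta> ! (l - 1)) = arch_q \<beta> l * arch_r \<beta> (l - 1)"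
proof (cases "l = 1")
  case False
  with assms(2) have l: "l - 1 \<in> {1..<length \<beta>}" "l - 1 \<in> {1..length \<beta>}" "1 < l"
    by auto
  show ?thesis
    using chainable_pair_factors(2)[OF chainable_arch_nth_pair[OF assms(1) l(1)]
        chainable_arch_nth_pattern_ok[OF assms(1) l(2)] chainable_arch_nth_pattern_ok[OF assms]] l False
    by (simp add: arch_q_def arch_r_def numeral_2_eq_2)
qed (simp add: arch_q_def arch_r_def)

lemma chainable_arch_pa:
  assumes "chainable_arch \<beta>" "l \<in> {1..length \<beta>}" "pa (hd \<beta>) = 1"
  shows "pa (\<beta> ! (l - 1)) = (\<Prod>j\<in>{1..<l}. arch_p \<beta> j)"
proof -
  let ?A = "\<lambda>l. pa (\<beta> ! (l - 1))"
  have "?A 1 * (\<Prod>j\<in>{1..<l}. ?A (Suc j) div ?A j) = ?A l"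
    using assms(2) chainable_arch_nth_pair[OF assms(1)]
    by (intro prod_quotients_telescope) (auto simp: chainable_pair_def)
  moreover have "?A 1 = 1"
    using assms(2,3) by (cases \<beta>) auto
  ultimately show ?thesis
    using assms(2) by (simp add: arch_p_def)
qed

lemma chainable_arch_pd:
  assumes "chainable_arch \<beta>" "l \<in> {1..length \<beta>}" "pd (last \<beta>) = 1"
  shows "pd (\<beta> ! (l - 1)) = (\<Prod>j\<in>{l+1..length \<beta>}. arch_q \<beta> j)"
proof -
  let ?D = "\<lambda>l. pd (\<beta> ! (l - 1))" and ?L = "length \<beta>"
  have "?D ?L * (\<Prod>j\<in>{Suc l..?L}. ?D (j - 1) div ?D j) = ?D l"
  proof (rule prod_quotients_telescope')
    fix j assume "l < j" "j \<le> ?L"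
    with assms(2) have "j - 1 \<in> {1..<?L}"
      by auto
    then show "?D j dvd ?D (j - 1)"
      using chainable_arch_nth_pair[OF assms(1) \<open>j - 1 \<in> {1..<?L}\<close>] by (simp add: chainable_pair_def)
  qed (use assms(2) in simp)
  moreover have "?D ?L = 1"
    using assms(2,3) last_conv_nth[of \<beta>] by (cases \<beta>) auto
  ultimately show ?thesis
    using assms(2) by (simp add: arch_q_def numeral_2_eq_2)
qed

lemma chainable_arch_eq_arch_of:
  assumes "chainable_arch \<beta>" "pa (hd \<beta>) = 1" "pd (last \<beta>) = 1"
  shows "\<beta> = arch_of (length \<beta>) (arch_p \<beta>) (arch_q \<beta>) (arch_r \<beta>)"
proof (rule nth_equalityI)
  fix k assume "k < length \<beta>"
  then have l: "Suc k \<in> {1..length \<beta>}"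
    by simp
  have "\<beta> ! k = (pa (\<beta> ! k), pb (\<beta> ! k), pc (\<beta> ! k), pd (\<beta> ! k))"
    by (simp add: pa_def pb_def pc_def pd_def)
  then show "\<beta> ! k = arch_of (length \<beta>) (arch_p \<beta>) (arch_q \<beta>) (arch_r \<beta>) ! k"
    using nth_arch_of[OF l] chainable_arch_pa[OF assms(1) l assms(2)] chainable_arch_pb[OF assms(1) l]
      chainable_arch_pc[OF assms(1) l] chainable_arch_pd[OF assms(1) l assms(3)]
    by simp
qed (simp add: length_arch_of)

lemma arch_params_pos:
  assumes "chainable_arch \<beta>"
  shows "\<forall>l\<in>{1..length \<beta>}. 0 < arch_p \<beta> l \<and> 0 < arch_q \<beta> l"
    and "\<forall>l\<in>{1..<length \<beta>}. 0 < arch_r \<beta> l"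
proof -
  have pos: "0 < pb (\<beta> ! (l - 1))" "0 < pc (\<beta> ! (l - 1))" if "l \<in> {1..length \<beta>}" for l
    using chainable_arch_nth_pattern_ok[OF assms that] by (simp_all add: pattern_ok_def)
  show "\<forall>l\<in>{1..length \<beta>}. 0 < arch_p \<beta> l \<and> 0 < arch_q \<beta> l"
  proof
    fix l assume l: "l \<in> {1..length \<beta>}"
    show "0 < arch_p \<beta> l \<and> 0 < arch_q \<beta> l"
      using pos[OF l] chainable_arch_pb[OF assms l] chainable_arch_pc[OF assms l] by simp
  qed
  show "\<forall>l\<in>{1..<length \<beta>}. 0 < arch_r \<beta> l"
  proof
    fix l assume "l \<in> {1..<length \<beta>}"
    then have l: "l \<in> {1..length \<beta>}"
      by simp
    show "0 < arch_r \<beta> l"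
      using pos[OF l] chainable_arch_pc[OF assms l] by simp
  qed
qed

lemma full_support_arch_eq_arch_of:
  assumes ch: "chainable_arch \<beta>" and len: "length \<beta> = L" "0 < L"
    and M: "M \<in> B_set \<beta>" "all_nonzero M" "M \<in> carrier_mat m n" and "0 < m" "2 \<le> n"
  obtains p q r where "\<forall>l\<in>{1..L}. 0 < p l \<and> 0 < q l" "\<forall>l\<in>{1..<L}. 0 < r l" "r 0 = 1" "r L = 1"
    "m = (\<Prod>l\<in>{1..L}. q l)" "n = (\<Prod>l\<in>{1..L}. p l)" "\<beta> = arch_of L p q r"
proof -
  define p q r where "p = arch_p \<beta>" and "q = arch_q \<beta>" and "r = arch_r \<beta>"
  have ne: "\<beta> \<noteq> []"
    using len by auto
  have dims: "m = pat_rows (hd \<beta>)" "n = pat_cols (last \<beta>)"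
    using B_set_block_supported(1)[OF ch ne M(1)] M(3) by auto
  then have "pa (hd \<beta>) = 1" "pd (last \<beta>) = 1"
    using B_set_full_support_ends[OF ch ne M(1,2)] assms(7,8) by simp_all
  then have \<beta>: "\<beta> = arch_of L p q r"
    using chainable_arch_eq_arch_of[OF ch] unfolding p_def q_def r_def len by blast
  have pos: "\<forall>l\<in>{1..L}. 0 < p l \<and> 0 < q l" "\<forall>l\<in>{1..<L}. 0 < r l"
    using arch_params_pos[OF ch] by (simp_all add: p_def q_def r_def len)
  have r: "r 0 = 1" "r L = 1"
    by (simp_all add: r_def arch_r_def len)
  have "m = (\<Prod>l\<in>{1..L}. q l)" "n = (\<Prod>l\<in>{1..L}. p l)"
    using dims arch_of_ends(2,4)[OF len(2) r, of p q] by (simp_all add: \<beta>[symmetric])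
  with pos r \<beta> show ?thesis
    by (intro that)
qed

theorem lemma4p16:
  fixes m n L :: nat
  assumes "m \<ge> 2" and "n \<ge> 2" and "L \<ge> 2"
  shows
   "(\<forall>\<beta>. length \<beta> = L \<and> chainable_arch \<beta> \<and> B_set \<beta> \<subseteq> carrier_mat m n \<and>
         (\<exists>M \<in> B_set \<beta>. all_nonzero M) \<longrightarrow>
      (\<exists>p q r :: nat \<Rightarrow> nat.
         (\<forall>l \<in> {1..L}. p l > 0 \<and> q l > 0) \<and> (\<forall>l \<in> {1..<L}. r l > 0) \<and>
         r 0 = 1 \<and> r L = 1 \<and>
         m = (\<Prod>l\<in>{1..L}. q l) \<and> n = (\<Prod>l\<in>{1..L}. p l) \<and>
         (\<forall>l \<in> {1..L}.
            pa (\<beta>!(l-1)) = (\<Prod>j\<in>{1..<l}. p j) \<and>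
            pd (\<beta>!(l-1)) = (\<Prod>j\<in>{l+1..L}. q j) \<and>
            pb (\<beta>!(l-1)) = q l * r (l-1) \<and>
            pc (\<beta>!(l-1)) = p l * r l)))
    \<and>
    (\<forall>p q r :: nat \<Rightarrow> nat.
       (\<forall>l \<in> {1..L}. p l > 0 \<and> q l > 0) \<and> (\<forall>l \<in> {1..<L}. r l > 0) \<and>
       r 0 = 1 \<and> r L = 1 \<and>
       m = (\<Prod>l\<in>{1..L}. q l) \<and> n = (\<Prod>l\<in>{1..L}. p l) \<longrightarrow>
       chainable_arch (arch_of L p q r) \<and>
       B_set (arch_of L p q r) \<subseteq> carrier_mat m n \<and>
       (\<exists>M \<in> B_set (arch_of L p q r). all_nonzero M) \<and>
       (\<not> redundant_arch (arch_of L p q r) \<longleftrightarrow>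
          r 1 < q 1 \<and> r (L-1) < p L \<and>
          (\<forall>l \<in> {2..L-1}. 1 / real (p l) < real (r l) / real (r (l-1)) \<and>
                            real (r l) / real (r (l-1)) < real (q l))))"
  apply (intro conjI allI impI; elim conjE)
  subgoal premises hyps for \<beta>
  proof -
    obtain M where M: "M \<in> B_set \<beta>" "all_nonzero M" "M \<in> carrier_mat m n"
      using hyps(3,4) by blast
    have "0 < L" "0 < m"
      using assms by simp_all
    then obtain p q r where pqr: "\<forall>l\<in>{1..L}. 0 < p l \<and> 0 < q l" "\<forall>l\<in>{1..<L}. 0 < r l"
        "r 0 = 1" "r L = 1" "m = (\<Prod>l\<in>{1..L}. q l)" "n = (\<Prod>l\<in>{1..L}. p l)"
      and \<beta>: "\<beta> = arch_of L p q r"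
      using full_support_arch_eq_arch_of[OF hyps(2,1) _ M] assms(2) by metis
    have "\<forall>l\<in>{1..L}. pa (\<beta> ! (l - 1)) = (\<Prod>j\<in>{1..<l}. p j) \<and>
        pd (\<beta> ! (l - 1)) = (\<Prod>j\<in>{l+1..L}. q j) \<and>
        pb (\<beta> ! (l - 1)) = q l * r (l - 1) \<and> pc (\<beta> ! (l - 1)) = p l * r l"
      unfolding \<beta> using nth_arch_of[of _ L p q r] by (simp add: pa_def pb_def pc_def pd_def)
    with pqr show ?thesis
      by blast
  qed
  subgoal for p q r
    using chainable_arch_arch_of by blast
  subgoal for p q r
    using arch_of_B_set(1)[of L p q r] assms(3) by simp
  subgoal for p q r
    using arch_of_B_set(2)[of L p q r] assms(3) by simp
  subgoal for p q r
    using nonredundant_arch_of_iff[of L p q r] nonredundancy_conditions_iff[OF assms(3), of p r q] by simp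
  done

end
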